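(* Let $n\ge2$, $1\le n_c\le n-1$, let $\rho_{\text{in}}$ be an $n$-qubit density matrix, and let $f_{\text{SC}}$ be the objective function of the $n$-qubit SC-QNN with parameter $n_c$. Then $$\mathbb{E}_{\boldsymbol\theta}\Big(f_{\text{SC}}-\frac12\Big)^2\ge\frac{\text{Tr}[(\sigma_1\otimes I^{\otimes(n-1)})\rho_{\text{in}}]^2+\text{Tr}[(\sigma_3\otimes I^{\otimes(n-1)})\rho_{\text{in}}]^2}{2^{3+n_c}},$$ where the expectation is over all parameters drawn independently and uniformly from $[0,2\pi]$.
   Context: Pauli matrices $\sigma_0=I,\sigma_1=X,\sigma_2=Y,\sigma_3=Z$; qubits numbered $1,\dots,n$. A rotation with parameter $\theta$ on qubit $q$ is $e^{-i\theta\sigma_2}$ on qubit $q$. A CNOT with control $c$ and target $t$ is $|0\rangle\langle0|_c\otimes I_t+|1\rangle\langle1|_c\otimes(\sigma_1)_t$. SC-QNN: $V_{\text{SC}}=V_nCX_{n-1}V_{n-1}\cdots CX_1V_1$, where $V_1$ applies a rotation with independent parameter to every qubit; for $2\le\ell\le n-n_c$, $V_\ell$ is a single rotation on qubit $n+1-\ell$; for $n-n_c+1\le\ell\le n$, $V_\ell$ is a single rotation on qubit $1$; for $1\le\ell\le n-1-n_c$, $CX_\ell$ is a CNOT with control $n+1-\ell$ and target $n-\ell$; for $n-n_c\le\ell\le n-1$, $CX_\ell$ is a CNOT with control $n+1-\ell$ and target $1$. $f_{\text{SC}}(\boldsymbol\theta)=\frac12+\frac12\text{Tr}[(\sigma_3\otimes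 I^{\otimes(n-1)})V_{\text{SC}}(\boldsymbol\theta)\rho_{\text{in}}V_{\text{SC}}(\boldsymbol\theta)^\dagger]$. *)

theory Defs
  imports "HOL-Probability.Probability" "Jordan_Normal_Form.Matrix"
begin

text \<open>n-qubit operators are 2^n x 2^n complex matrices. Basis index i < 2^n;
  qubit q (1 \<le> q \<le> n) corresponds to bit (n - q) of i, so qubit 1 is the
  leftmost tensor factor.\<close>

definition qbit :: "nat \<Rightarrow> nat \<Rightarrow> nat \<Rightarrow> bool" where
  "qbit n q i = odd (i div 2 ^ (n - q))"

definition qclr :: "nat \<Rightarrow> nat \<Rightarrow> nat \<Rightarrow> nat" where
  "qclr n q i = (if qbit n q i then i - 2 ^ (n - q) else i)"

definition qflip :: "nat \<Rightarrow> nat \<Rightarrow> nat \<Rightarrow> nat" where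
  "qflip n q i = (if qbit n q i then i - 2 ^ (n - q) else i + 2 ^ (n - q))"

definition on_qubit :: "nat \<Rightarrow> nat \<Rightarrow> complex mat \<Rightarrow> complex mat" where
  "on_qubit n q U = mat (2 ^ n) (2 ^ n)
     (\<lambda>(i, j). if qclr n q i = qclr n q j
               then U $$ (of_bool (qbit n q i), of_bool (qbit n q j)) else 0)"

definition sigma1 :: "complex mat" where
  "sigma1 = mat 2 2 (\<lambda>(i, j). if i \<noteq> j then 1 else 0)"
definition sigma2 :: "complex mat" where
  "sigma2 = mat 2 2 (\<lambda>(i, j). if i = 0 \<and> j = 1 then - \<i> else if i = 1 \<and> j = 0 then \<i> else 0)"
definition sigma3 :: "complex mat" where
  "sigma3 = mat 2 2 (\<lambda>(i, j). if i = j then (if i = 0 then 1 else -1) else 0)"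

text \<open>The rotation e^{-i theta sigma_2} = cos theta I - i sin theta sigma_2
  (since sigma_2^2 = I), written out explicitly.\<close>
definition rotY :: "real \<Rightarrow> complex mat" where
  "rotY \<theta> = complex_of_real (cos \<theta>) \<cdot>\<^sub>m one_mat 2 + (- \<i> * complex_of_real (sin \<theta>)) \<cdot>\<^sub>m sigma2"

definition cnot :: "nat \<Rightarrow> nat \<Rightarrow> nat \<Rightarrow> complex mat" where
  "cnot n c t = mat (2 ^ n) (2 ^ n)
     (\<lambda>(i, j). if qbit n c j then (if i = qflip n t j then 1 else 0)
               else (if i = j then 1 else 0))"

definition mtrace :: "complex mat \<Rightarrow> complex" where
  "mtrace A = (\<Sum>i < dim_row A. A $$ (i, i))"

definition adj :: "complex mat \<Rightarrow> complex mat" where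
  "adj A = mat (dim_col A) (dim_row A) (\<lambda>(i, j). cnj (A $$ (j, i)))"

text \<open>Parameters: theta (q - 1) is the parameter of the rotation on qubit q in V_1
  (q = 1..n); theta (n + l - 2) is the parameter of V_l for l = 2..n.
  In total 2n - 1 parameters, indices 0..2n-2.\<close>

definition V1 :: "nat \<Rightarrow> (nat \<Rightarrow> real) \<Rightarrow> complex mat" where
  "V1 n \<theta> = foldr (\<lambda>q M. on_qubit n q (rotY (\<theta> (q - 1))) * M) [1..<n+1] (one_mat (2 ^ n))"

definition Vl :: "nat \<Rightarrow> nat \<Rightarrow> (nat \<Rightarrow> real) \<Rightarrow> nat \<Rightarrow> complex mat" where
  "Vl n nc \<theta> l = (if l = 1 then V1 n \<theta>
     else on_qubit n (if l \<le> n - nc then n + 1 - l else 1) (rotY (\<theta> (n + l - 2))))"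

definition CX :: "nat \<Rightarrow> nat \<Rightarrow> nat \<Rightarrow> complex mat" where
  "CX n nc l = cnot n (n + 1 - l) (if l \<le> n - 1 - nc then n - l else 1)"

fun SC_partial :: "nat \<Rightarrow> nat \<Rightarrow> (nat \<Rightarrow> real) \<Rightarrow> nat \<Rightarrow> complex mat" where
  "SC_partial n nc \<theta> 0 = Vl n nc \<theta> 1"
| "SC_partial n nc \<theta> (Suc k) = Vl n nc \<theta> (k + 2) * CX n nc (k + 1) * SC_partial n nc \<theta> k"

definition V_SC :: "nat \<Rightarrow> nat \<Rightarrow> (nat \<Rightarrow> real) \<Rightarrow> complex mat" where
  "V_SC n nc \<theta> = SC_partial n nc \<theta> (n - 1)"

text \<open>f_SC; the trace is real for Hermitian rho, we take its real part.\<close>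
definition f_SC :: "nat \<Rightarrow> nat \<Rightarrow> complex mat \<Rightarrow> (nat \<Rightarrow> real) \<Rightarrow> real" where
  "f_SC n nc \<rho> \<theta> = 1/2 + 1/2 * Re (mtrace (on_qubit n 1 sigma3 * V_SC n nc \<theta> * \<rho> * adj (V_SC n nc \<theta>)))"

definition density_matrix :: "nat \<Rightarrow> complex mat \<Rightarrow> bool" where
  "density_matrix n \<rho> \<longleftrightarrow> \<rho> \<in> carrier_mat (2 ^ n) (2 ^ n)
     \<and> (\<forall>i < 2 ^ n. \<forall>j < 2 ^ n. \<rho> $$ (i, j) = cnj (\<rho> $$ (j, i)))
     \<and> (\<forall>v :: nat \<Rightarrow> complex. 0 \<le> Re (\<Sum>i < 2 ^ n. \<Sum>j < 2 ^ n. cnj (v i) * \<rho> $$ (i, j) * v j))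
     \<and> mtrace \<rho> = 1"

definition param_measure :: "nat \<Rightarrow> (nat \<Rightarrow> real) measure" where
  "param_measure n = PiM {..< 2 * n - 1} (\<lambda>_. uniform_measure lborel {0 .. 2 * pi})"

end

theory Submission
  imports Defs
begin

(* Work in the Heisenberg picture with x_k and z_k, the expectations of X and Z on qubit 1
   after the first k + 1 layers of the circuit.  A Y-rotation by t on qubit 1 rotates the pair
   (x, z) by the angle 2t; a CNOT with target qubit 1 commutes with X on qubit 1, so it keeps x
   and only changes the partner of x; gates away from qubit 1 commute with both observables.
   Every layer brings a fresh uniform angle t, and averaging over it gives
   E (cos 2t a + sin 2t b)^2 = (E a^2 + E b^2) / 2 >= E a^2 / 2 when a, b do not depend on t.
   Hence E x_0^2 = (Tr[X_1 rho]^2 + Tr[Z_1 rho]^2) / 2, the n - n_c - 1 layers away from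
   qubit 1 leave x unchanged, each of the n_c layers acting on qubit 1 loses at most a factor 2
   (the last one passing from x to z), and f_SC - 1/2 = z_(n-1) / 2. *)

lemma less_power2_iff_bits: "(i::nat) < 2 ^ n \<longleftrightarrow> (\<forall>k. bit i k \<longrightarrow> k < n)"
proof -
  have "i < 2 ^ n \<longleftrightarrow> take_bit n i = i" by (simp add: take_bit_nat_eq_self_iff)
  also have "\<dots> \<longleftrightarrow> (\<forall>k. bit i k \<longrightarrow> k < n)"
    by (auto simp: bit_eq_iff bit_take_bit_iff)
  finally show ?thesis .
qed

lemma set_bit_less_power2: "(i::nat) < 2 ^ n \<Longrightarrow> m < n \<Longrightarrow> set_bit m i < 2 ^ n"
  and unset_bit_less_power2: "(i::nat) < 2 ^ n \<Longrightarrow> unset_bit m i < 2 ^ n"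
  and flip_bit_less_power2: "(i::nat) < 2 ^ n \<Longrightarrow> m < n \<Longrightarrow> flip_bit m i < 2 ^ n"
  by (auto simp: less_power2_iff_bits bit_simps)

lemma unset_bit_eq_unset_bit_iff:
  "unset_bit m (x::nat) = unset_bit m y \<longleftrightarrow> (\<forall>b. b \<noteq> m \<longrightarrow> bit x b = bit y b)"
  by (auto simp: bit_eq_iff bit_unset_bit_iff)

lemma nat_eq_by_unset_bitI:
  "unset_bit m (x::nat) = unset_bit m y \<Longrightarrow> bit x m = bit y m \<Longrightarrow> x = y"
  by (metis bit_eqI unset_bit_eq_unset_bit_iff)

lemma unset_bit_unset_bit_nat [simp]: "unset_bit m (unset_bit m (i::nat)) = unset_bit m i"
  and unset_bit_set_bit_nat [simp]: "unset_bit m (set_bit m (i::nat)) = unset_bit m i"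
  and flip_bit_flip_bit_nat [simp]: "flip_bit m (flip_bit m (i::nat)) = i"
  by (auto simp: bit_eq_iff bit_simps)

lemma unset_bit_nat_eq_if: "unset_bit m (i::nat) = (if bit i m then i - 2 ^ m else i)"
proof (cases "bit i m")
  case True
  then have "i = set_bit m (unset_bit m i)" by (intro bit_eqI) (auto simp: bit_simps)
  also have "\<dots> = unset_bit m i + 2 ^ m" by (simp add: set_bit_eq bit_simps)
  finally show ?thesis using True by simp
next
  case False
  then have "unset_bit m i = i" by (intro bit_eqI) (auto simp: bit_simps)
  then show ?thesis using False by simp
qed

lemma qbit_eq_bit: "qbit n q i = bit i (n - q)"
  by (simp add: qbit_def bit_iff_odd)

lemma qclr_eq_unset_bit: "qclr n q i = unset_bit (n - q) i"
  by (simp add: qclr_def qbit_eq_bit unset_bit_nat_eq_if)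

lemma qflip_eq_flip_bit: "qflip n q i = flip_bit (n - q) i"
  by (simp add: qflip_def qbit_eq_bit flip_bit_eq_if unset_bit_nat_eq_if set_bit_eq)

lemma sum_unset_bit_eq:
  fixes h :: "nat \<Rightarrow> 'a::comm_monoid_add"
  assumes i: "i < 2 ^ n" and m: "m < n"
  shows "(\<Sum>k<2 ^ n. if unset_bit m i = unset_bit m k then h k else 0)
       = h (unset_bit m i) + h (set_bit m i)"
proof -
  have "unset_bit m i = unset_bit m k \<longleftrightarrow> k = unset_bit m i \<or> k = set_bit m i" for k
  proof
    assume eq: "unset_bit m i = unset_bit m k"
    show "k = unset_bit m i \<or> k = set_bit m i"
      using nat_eq_by_unset_bitI[of m k "unset_bit m i"] nat_eq_by_unset_bitI[of m k "set_bit m i"] eq[symmetric]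
      by (cases "bit k m") (simp_all add: bit_simps)
  qed auto
  then have "{k \<in> {..<2 ^ n}. unset_bit m i = unset_bit m k} = {unset_bit m i, set_bit m i}"
    using unset_bit_less_power2[OF i] set_bit_less_power2[OF i m] by auto
  moreover have "unset_bit m i \<noteq> set_bit m i"
  proof -
    have "\<not> bit (unset_bit m i) m" "bit (set_bit m i) m" by (simp_all add: bit_simps)
    then show ?thesis by metis
  qed
  ultimately show ?thesis
    by (simp add: sum.inter_filter[symmetric])
qed

lemma index_mult_mat_sum:
  fixes A B :: "'a::comm_semiring_0 mat"
  assumes "A \<in> carrier_mat r N" "B \<in> carrier_mat N c" "i < r" "j < c"
  shows "(A * B) $$ (i, j) = (\<Sum>k<N. A $$ (i, k) * B $$ (k, j))"
  using assms by (auto simp: scalar_prod_def lessThan_atLeast0 intro!: sum.cong)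

lemma eq_mat_2I:
  fixes A B :: "'a mat"
  assumes "A \<in> carrier_mat 2 2" "B \<in> carrier_mat 2 2"
    "A $$ (0, 0) = B $$ (0, 0)" "A $$ (0, 1) = B $$ (0, 1)"
    "A $$ (1, 0) = B $$ (1, 0)" "A $$ (1, 1) = B $$ (1, 1)"
  shows "A = B"
proof (rule eq_matI)
  fix i j assume "i < dim_row B" "j < dim_col B"
  then have "i = 0 \<or> i = 1" "j = 0 \<or> j = 1" using assms by auto
  then show "A $$ (i, j) = B $$ (i, j)" using assms by auto
qed (use assms in auto)

lemma mult_mat_2:
  fixes A B :: "'a::comm_semiring_0 mat"
  assumes "A \<in> carrier_mat 2 2" "B \<in> carrier_mat 2 2"
  shows "A * B = mat 2 2 (\<lambda>(i, j). A $$ (i, 0) * B $$ (0, j) + A $$ (i, 1) * B $$ (1, j))"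
  using assms by (intro eq_matI) (auto simp: scalar_prod_def numeral_2_eq_2 sum.atLeast0_lessThan_Suc)

lemma mult_carrier_mat_square [simp]:
  "A \<in> carrier_mat N N \<Longrightarrow> B \<in> carrier_mat N N \<Longrightarrow> A * B \<in> carrier_mat N N"
  by (rule mult_carrier_mat)

lemma adj_carrier [simp]: "adj A \<in> carrier_mat (dim_col A) (dim_row A)"
  and dim_row_adj [simp]: "dim_row (adj A) = dim_col A"
  and dim_col_adj [simp]: "dim_col (adj A) = dim_row A"
  by (auto simp: adj_def)

lemma adj_carrier_square [simp]: "A \<in> carrier_mat N N \<Longrightarrow> adj A \<in> carrier_mat N N"
  using adj_carrier[of A] by auto

lemma index_adj [simp]: "i < dim_col A \<Longrightarrow> j < dim_row A \<Longrightarrow> adj A $$ (i, j) = cnj (A $$ (j, i))"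
  by (simp add: adj_def)

lemma adj_one: "adj (1\<^sub>m N) = 1\<^sub>m N"
  by (rule eq_matI) auto

lemma adj_mult:
  assumes A: "A \<in> carrier_mat r k" and B: "B \<in> carrier_mat k c"
  shows "adj (A * B) = adj B * adj A"
proof (rule eq_matI)
  fix i j assume "i < dim_row (adj B * adj A)" "j < dim_col (adj B * adj A)"
  then have i: "i < c" and j: "j < r" using A B by auto
  have "adj (A * B) $$ (i, j) = cnj (\<Sum>l<k. A $$ (j, l) * B $$ (l, i))"
    using A B i j by (simp add: index_mult_mat_sum[OF A B j i])
  also have "\<dots> = (\<Sum>l<k. adj B $$ (i, l) * adj A $$ (l, j))"
    using A B i j by (auto simp: mult.commute intro!: sum.cong)
  also have "\<dots> = (adj B * adj A) $$ (i, j)"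
    by (rule index_mult_mat_sum[symmetric]) (use A B i j in auto)
  finally show "adj (A * B) $$ (i, j) = (adj B * adj A) $$ (i, j)" .
qed (use A B in auto)

lemma adj_mult_self_mult:
  assumes A: "A \<in> carrier_mat N N" and B: "B \<in> carrier_mat N N"
    and "adj A * A = 1\<^sub>m N" and "adj B * B = 1\<^sub>m N"
  shows "adj (A * B) * (A * B) = 1\<^sub>m N"
proof -
  have "adj (A * B) * (A * B) = adj B * ((adj A * A) * B)"
    using A B by (simp add: adj_mult[OF A B] assoc_mult_mat[of _ N N _ N _ N])
  then show ?thesis using assms by simp
qed

lemma mult_commute_mult:
  assumes A: "A \<in> carrier_mat N N" and B: "B \<in> carrier_mat N N" and P: "P \<in> carrier_mat N N"
    and AP: "A * P = P * A" and BP: "B * P = P * B"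
  shows "(A * B) * P = P * (A * B)"
proof -
  have "(A * B) * P = A * (B * P)" using A B P by (simp add: assoc_mult_mat[of _ N N _ N _ N])
  also have "\<dots> = (A * P) * B" using A B P BP by (simp add: assoc_mult_mat[of _ N N _ N _ N])
  also have "\<dots> = P * (A * B)" using A B P AP by (simp add: assoc_mult_mat[of _ N N _ N _ N])
  finally show ?thesis .
qed

lemma mtrace_mult_commute:
  assumes A: "A \<in> carrier_mat r c" and B: "B \<in> carrier_mat c r"
  shows "mtrace (A * B) = mtrace (B * A)"
proof -
  have "mtrace (A * B) = (\<Sum>i<r. (A * B) $$ (i, i))" using A by (simp add: mtrace_def)
  also have "\<dots> = (\<Sum>i<r. \<Sum>k<c. A $$ (i, k) * B $$ (k, i))"
    by (rule sum.cong[OF refl], rule index_mult_mat_sum[OF A B]) auto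
  also have "\<dots> = (\<Sum>k<c. \<Sum>i<r. B $$ (k, i) * A $$ (i, k))"
    by (subst sum.swap) (simp add: mult.commute)
  also have "\<dots> = (\<Sum>k<c. (B * A) $$ (k, k))"
    by (rule sum.cong[OF refl], rule index_mult_mat_sum[OF B A, symmetric]) auto
  also have "\<dots> = mtrace (B * A)" using B by (simp add: mtrace_def)
  finally show ?thesis .
qed

lemma mtrace_add:
  "A \<in> carrier_mat r r \<Longrightarrow> B \<in> carrier_mat r r \<Longrightarrow> mtrace (A + B) = mtrace A + mtrace B"
  by (auto simp: mtrace_def sum.distrib)

lemma mtrace_smult: "A \<in> carrier_mat r r \<Longrightarrow> mtrace (a \<cdot>\<^sub>m A) = a * mtrace A"
  by (auto simp: mtrace_def sum_distrib_left)

section \<open>Single-qubit operators and permutation matrices\<close>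

definition bit_op :: "nat \<Rightarrow> nat \<Rightarrow> complex mat \<Rightarrow> complex mat" where
  "bit_op n m U = mat (2 ^ n) (2 ^ n)
     (\<lambda>(i, j). if unset_bit m i = unset_bit m j
               then U $$ (of_bool (bit i m), of_bool (bit j m)) else 0)"

lemma on_qubit_eq_bit_op: "on_qubit n q U = bit_op n (n - q) U"
  unfolding on_qubit_def bit_op_def qclr_eq_unset_bit qbit_eq_bit ..

lemma bit_op_carrier [simp]: "bit_op n m U \<in> carrier_mat (2 ^ n) (2 ^ n)"
  and dim_row_bit_op [simp]: "dim_row (bit_op n m U) = 2 ^ n"
  and dim_col_bit_op [simp]: "dim_col (bit_op n m U) = 2 ^ n"
  by (auto simp: bit_op_def)

lemma index_bit_op:
  "i < 2 ^ n \<Longrightarrow> j < 2 ^ n \<Longrightarrow> bit_op n m U $$ (i, j) =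
     (if unset_bit m i = unset_bit m j then U $$ (of_bool (bit i m), of_bool (bit j m)) else 0)"
  by (simp add: bit_op_def)

lemma index_bit_op_mult:
  assumes B: "B \<in> carrier_mat (2 ^ n) c" and m: "m < n" and i: "i < 2 ^ n" and j: "j < c"
  shows "(bit_op n m U * B) $$ (i, j)
    = U $$ (of_bool (bit i m), 0) * B $$ (unset_bit m i, j)
    + U $$ (of_bool (bit i m), 1) * B $$ (set_bit m i, j)"
proof -
  have "(bit_op n m U * B) $$ (i, j) = (\<Sum>k<2 ^ n. bit_op n m U $$ (i, k) * B $$ (k, j))"
    by (rule index_mult_mat_sum[OF _ B i j]) simp
  also have "\<dots> = (\<Sum>k<2 ^ n. if unset_bit m i = unset_bit m k then
        U $$ (of_bool (bit i m), of_bool (bit k m)) * B $$ (k, j) else 0)"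
    by (rule sum.cong) (auto simp: index_bit_op i)
  also have "\<dots> = U $$ (of_bool (bit i m), 0) * B $$ (unset_bit m i, j)
      + U $$ (of_bool (bit i m), 1) * B $$ (set_bit m i, j)"
    by (subst sum_unset_bit_eq[OF i m]) (simp add: bit_simps)
  finally show ?thesis .
qed

lemma bit_op_mult_bit_op:
  assumes U: "U \<in> carrier_mat 2 2" and V: "V \<in> carrier_mat 2 2" and m: "m < n"
  shows "bit_op n m U * bit_op n m V = bit_op n m (U * V)"
proof (rule eq_matI)
  fix i j assume "i < dim_row (bit_op n m (U * V))" "j < dim_col (bit_op n m (U * V))"
  then have i: "i < 2 ^ n" and j: "j < 2 ^ n" by auto
  show "(bit_op n m U * bit_op n m V) $$ (i, j) = bit_op n m (U * V) $$ (i, j)"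
    unfolding index_bit_op_mult[OF bit_op_carrier m i j]
    using unset_bit_less_power2[OF i] set_bit_less_power2[OF i m] i j
    by (simp add: index_bit_op mult_mat_2[OF U V] bit_simps)
qed auto

lemma index_bit_op_mult_bit_op:
  assumes m: "m < n" and m': "m' < n" and mm': "m \<noteq> m'" and i: "i < 2 ^ n" and j: "j < 2 ^ n"
  shows "(bit_op n m U * bit_op n m' V) $$ (i, j) =
    (if \<forall>b. b \<noteq> m \<and> b \<noteq> m' \<longrightarrow> bit i b = bit j b
     then U $$ (of_bool (bit i m), of_bool (bit j m)) * V $$ (of_bool (bit i m'), of_bool (bit j m'))
     else 0)"
proof -
  have e0: "unset_bit m' (unset_bit m i) = unset_bit m' j \<longleftrightarrow>
      (\<forall>b. b \<noteq> m \<and> b \<noteq> m' \<longrightarrow> bit i b = bit j b) \<and> \<not> bit j m"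
    and e1: "unset_bit m' (set_bit m i) = unset_bit m' j \<longleftrightarrow>
      (\<forall>b. b \<noteq> m \<and> b \<noteq> m' \<longrightarrow> bit i b = bit j b) \<and> bit j m"
    unfolding unset_bit_eq_unset_bit_iff using mm' by (auto simp: bit_simps)
  have "(bit_op n m U * bit_op n m' V) $$ (i, j)
    = U $$ (of_bool (bit i m), 0) * (if unset_bit m' (unset_bit m i) = unset_bit m' j
         then V $$ (of_bool (bit i m'), of_bool (bit j m')) else 0)
    + U $$ (of_bool (bit i m), 1) * (if unset_bit m' (set_bit m i) = unset_bit m' j
         then V $$ (of_bool (bit i m'), of_bool (bit j m')) else 0)"
    unfolding index_bit_op_mult[OF bit_op_carrier m i j]
    using unset_bit_less_power2[OF i] set_bit_less_power2[OF i m] j mm'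
    by (simp add: index_bit_op bit_unset_bit_iff bit_set_bit_iff)
  also have "\<dots> = (if \<forall>b. b \<noteq> m \<and> b \<noteq> m' \<longrightarrow> bit i b = bit j b
     then U $$ (of_bool (bit i m), of_bool (bit j m)) * V $$ (of_bool (bit i m'), of_bool (bit j m'))
     else 0)"
    unfolding e0 e1 by auto
  finally show ?thesis .
qed

lemma bit_op_commute:
  assumes "m < n" "m' < n" "m \<noteq> m'"
  shows "bit_op n m U * bit_op n m' V = bit_op n m' V * bit_op n m U"
proof (rule eq_matI)
  fix i j assume "i < dim_row (bit_op n m' V * bit_op n m U)" "j < dim_col (bit_op n m' V * bit_op n m U)"
  then have i: "i < 2 ^ n" and j: "j < 2 ^ n" by auto
  show "(bit_op n m U * bit_op n m' V) $$ (i, j) = (bit_op n m' V * bit_op n m U) $$ (i, j)"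
    unfolding index_bit_op_mult_bit_op[OF assms i j] index_bit_op_mult_bit_op[OF assms(2,1) assms(3)[symmetric] i j]
    by (auto simp: mult.commute)
qed auto

lemma adj_bit_op: "U \<in> carrier_mat 2 2 \<Longrightarrow> adj (bit_op n m U) = bit_op n m (adj U)"
  by (rule eq_matI) (auto simp: index_bit_op)

lemma bit_op_lincomb:
  assumes "U \<in> carrier_mat 2 2" "V \<in> carrier_mat 2 2"
  shows "bit_op n m (a \<cdot>\<^sub>m U + b \<cdot>\<^sub>m V) = a \<cdot>\<^sub>m bit_op n m U + b \<cdot>\<^sub>m bit_op n m V"
  by (rule eq_matI) (use assms in \<open>auto simp: index_bit_op\<close>)

lemma bit_op_one: "bit_op n m (1\<^sub>m 2) = 1\<^sub>m (2 ^ n)"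
proof (rule eq_matI)
  fix i j assume "i < dim_row (1\<^sub>m (2 ^ n) :: complex mat)" "j < dim_col (1\<^sub>m (2 ^ n) :: complex mat)"
  then have "i < 2 ^ n" "j < 2 ^ n" by auto
  moreover have "unset_bit m i = unset_bit m j \<and> bit i m = bit j m \<longleftrightarrow> i = j"
    by (auto intro: nat_eq_by_unset_bitI)
  ultimately show "bit_op n m (1\<^sub>m 2) $$ (i, j) = 1\<^sub>m (2 ^ n) $$ (i, j)"
    by (auto simp: index_bit_op of_bool_def split: if_splits)
qed auto

definition perm_mat :: "nat \<Rightarrow> (nat \<Rightarrow> nat) \<Rightarrow> complex mat" where
  "perm_mat n \<pi> = mat (2 ^ n) (2 ^ n) (\<lambda>(i, j). if i = \<pi> j then 1 else 0)"

definition involution_below :: "nat \<Rightarrow> (nat \<Rightarrow> nat) \<Rightarrow> bool" where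
  "involution_below N \<pi> \<longleftrightarrow> (\<forall>j < N. \<pi> j < N \<and> \<pi> (\<pi> j) = j)"

lemma perm_mat_carrier [simp]: "perm_mat n \<pi> \<in> carrier_mat (2 ^ n) (2 ^ n)"
  and dim_row_perm_mat [simp]: "dim_row (perm_mat n \<pi>) = 2 ^ n"
  and dim_col_perm_mat [simp]: "dim_col (perm_mat n \<pi>) = 2 ^ n"
  by (auto simp: perm_mat_def)

lemma index_perm_mat:
  "i < 2 ^ n \<Longrightarrow> j < 2 ^ n \<Longrightarrow> perm_mat n \<pi> $$ (i, j) = (if i = \<pi> j then 1 else 0)"
  by (simp add: perm_mat_def)

lemma index_mult_perm_mat:
  assumes A: "A \<in> carrier_mat r (2 ^ n)" and i: "i < r" and j: "j < 2 ^ n" and "\<pi> j < 2 ^ n"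
  shows "(A * perm_mat n \<pi>) $$ (i, j) = A $$ (i, \<pi> j)"
proof -
  have "(A * perm_mat n \<pi>) $$ (i, j) = (\<Sum>k<2 ^ n. if k = \<pi> j then A $$ (i, k) else 0)"
    unfolding index_mult_mat_sum[OF A perm_mat_carrier i j] by (rule sum.cong) (auto simp: index_perm_mat j)
  then show ?thesis using assms by simp
qed

lemma index_perm_mat_mult:
  assumes inv: "involution_below (2 ^ n) \<pi>"
    and A: "A \<in> carrier_mat (2 ^ n) c" and i: "i < 2 ^ n" and j: "j < c"
  shows "(perm_mat n \<pi> * A) $$ (i, j) = A $$ (\<pi> i, j)"
proof -
  have "(perm_mat n \<pi> * A) $$ (i, j) = (\<Sum>k<2 ^ n. if k = \<pi> i then A $$ (k, j) else 0)"
    unfolding index_mult_mat_sum[OF perm_mat_carrier A i j]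
    by (rule sum.cong) (use inv i in \<open>auto simp: index_perm_mat involution_below_def\<close>)
  then show ?thesis using inv i by (simp add: involution_below_def)
qed

lemma perm_mat_mult_perm_mat:
  assumes "\<And>j. j < 2 ^ n \<Longrightarrow> \<sigma> j < 2 ^ n"
  shows "perm_mat n \<pi> * perm_mat n \<sigma> = perm_mat n (\<pi> \<circ> \<sigma>)"
proof (rule eq_matI)
  fix i j assume "i < dim_row (perm_mat n (\<pi> \<circ> \<sigma>))" "j < dim_col (perm_mat n (\<pi> \<circ> \<sigma>))"
  then have i: "i < 2 ^ n" and j: "j < 2 ^ n" by auto
  show "(perm_mat n \<pi> * perm_mat n \<sigma>) $$ (i, j) = perm_mat n (\<pi> \<circ> \<sigma>) $$ (i, j)"
    unfolding index_mult_perm_mat[where \<pi> = \<sigma>, OF perm_mat_carrier i j assms[OF j]] using i j assms[OF j]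
    by (simp add: index_perm_mat)
qed auto

lemma adj_perm_mat: "involution_below (2 ^ n) \<pi> \<Longrightarrow> adj (perm_mat n \<pi>) = perm_mat n \<pi>"
  by (rule eq_matI) (auto simp: index_perm_mat involution_below_def)

lemma unitary_perm_mat:
  assumes inv: "involution_below (2 ^ n) \<pi>"
  shows "adj (perm_mat n \<pi>) * perm_mat n \<pi> = 1\<^sub>m (2 ^ n)"
proof -
  have "perm_mat n \<pi> * perm_mat n \<pi> = perm_mat n (\<pi> \<circ> \<pi>)"
    by (rule perm_mat_mult_perm_mat) (use inv in \<open>auto simp: involution_below_def\<close>)
  also have "\<dots> = 1\<^sub>m (2 ^ n)"
    by (rule eq_matI) (use inv in \<open>auto simp: index_perm_mat involution_below_def\<close>)
  finally show ?thesis using adj_perm_mat[OF inv] by simp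
qed

lemma bit_op_commute_perm_mat:
  assumes inv: "involution_below (2 ^ n) \<pi>"
    and bit_\<pi>: "\<And>j. j < 2 ^ n \<Longrightarrow> bit (\<pi> j) m = bit j m"
    and unset_\<pi>: "\<And>j. j < 2 ^ n \<Longrightarrow> unset_bit m (\<pi> j) = \<pi> (unset_bit m j)"
  shows "bit_op n m U * perm_mat n \<pi> = perm_mat n \<pi> * bit_op n m U"
proof (rule eq_matI)
  fix i j assume "i < dim_row (perm_mat n \<pi> * bit_op n m U)" "j < dim_col (perm_mat n \<pi> * bit_op n m U)"
  then have i: "i < 2 ^ n" and j: "j < 2 ^ n" by auto
  have \<pi>i: "\<pi> i < 2 ^ n" and \<pi>j: "\<pi> j < 2 ^ n" using inv i j by (auto simp: involution_below_def)
  have ui: "unset_bit m i < 2 ^ n" and uj: "unset_bit m j < 2 ^ n"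
    using i j by (auto intro: unset_bit_less_power2)
  have "unset_bit m i = unset_bit m (\<pi> j) \<longleftrightarrow> unset_bit m (\<pi> i) = unset_bit m j"
    unfolding unset_\<pi>[OF i] unset_\<pi>[OF j] using inv ui uj unfolding involution_below_def by metis
  then show "(bit_op n m U * perm_mat n \<pi>) $$ (i, j) = (perm_mat n \<pi> * bit_op n m U) $$ (i, j)"
    unfolding index_mult_perm_mat[where \<pi> = \<pi>, OF bit_op_carrier i j \<pi>j]
      index_perm_mat_mult[OF inv bit_op_carrier i j]
    using i j \<pi>i \<pi>j bit_\<pi>[OF i] bit_\<pi>[OF j] by (simp add: index_bit_op)
qed auto

lemma bit_op_sigma1: "bit_op n m sigma1 = perm_mat n (flip_bit m)"
proof (rule eq_matI)
  fix i j assume "i < dim_row (perm_mat n (flip_bit m))" "j < dim_col (perm_mat n (flip_bit m))"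
  then have "i < 2 ^ n" "j < 2 ^ n" by auto
  moreover have "unset_bit m i = unset_bit m j \<and> bit i m \<noteq> bit j m \<longleftrightarrow> i = flip_bit m j"
  proof
    assume "unset_bit m i = unset_bit m j \<and> bit i m \<noteq> bit j m"
    then show "i = flip_bit m j"
      using nat_eq_by_unset_bitI[of m i "flip_bit m j"]
      by (auto simp: unset_bit_eq_unset_bit_iff bit_flip_bit_iff)
  qed (auto simp: unset_bit_eq_unset_bit_iff bit_flip_bit_iff)
  ultimately show "bit_op n m sigma1 $$ (i, j) = perm_mat n (flip_bit m) $$ (i, j)"
    by (auto simp: index_bit_op index_perm_mat sigma1_def of_bool_def split: if_splits)
qed auto

definition cnot_perm :: "nat \<Rightarrow> nat \<Rightarrow> nat \<Rightarrow> nat" where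
  "cnot_perm c t j = (if bit j c then flip_bit t j else j)"

lemma cnot_eq_perm_mat: "cnot n c t = perm_mat n (cnot_perm (n - c) (n - t))"
  unfolding cnot_def perm_mat_def cnot_perm_def qbit_eq_bit qflip_eq_flip_bit
  by (rule cong[OF refl]) (auto simp: fun_eq_iff)

lemma involution_cnot_perm: "c \<noteq> t \<Longrightarrow> t < n \<Longrightarrow> involution_below (2 ^ n) (cnot_perm c t)"
  by (auto simp: involution_below_def cnot_perm_def flip_bit_less_power2 bit_flip_bit_iff)

lemma cnot_perm_commute_sigma1_target:
  assumes "c \<noteq> t" "t < n"
  shows "perm_mat n (cnot_perm c t) * bit_op n t sigma1 = bit_op n t sigma1 * perm_mat n (cnot_perm c t)"
proof -
  have "cnot_perm c t \<circ> flip_bit t = flip_bit t \<circ> cnot_perm c t"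
    using assms(1) by (auto simp: fun_eq_iff cnot_perm_def bit_flip_bit_iff)
  moreover have "cnot_perm c t j < 2 ^ n" if "j < 2 ^ n" for j
    using assms that by (simp add: cnot_perm_def flip_bit_less_power2)
  ultimately show ?thesis
    using assms by (simp add: bit_op_sigma1 perm_mat_mult_perm_mat flip_bit_less_power2)
qed

lemma cnot_perm_commute_bit_op:
  assumes "c \<noteq> m" "t \<noteq> m" "c \<noteq> t" "t < n"
  shows "perm_mat n (cnot_perm c t) * bit_op n m U = bit_op n m U * perm_mat n (cnot_perm c t)"
proof (rule bit_op_commute_perm_mat[symmetric])
  show "involution_below (2 ^ n) (cnot_perm c t)" by (rule involution_cnot_perm) (use assms in auto)
next
  fix j :: nat
  show "bit (cnot_perm c t j) m = bit j m" using assms by (simp add: cnot_perm_def bit_flip_bit_iff)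
  have "unset_bit m (flip_bit t j) = flip_bit t (unset_bit m j)"
    by (rule bit_eqI) (use assms in \<open>auto simp: bit_unset_bit_iff bit_flip_bit_iff\<close>)
  then show "unset_bit m (cnot_perm c t j) = cnot_perm c t (unset_bit m j)"
    using assms by (simp add: cnot_perm_def bit_unset_bit_iff)
qed

lemma sigma1_carrier [simp]: "sigma1 \<in> carrier_mat 2 2"
  and sigma3_carrier [simp]: "sigma3 \<in> carrier_mat 2 2"
  and dim_sigma1 [simp]: "dim_row sigma1 = 2" "dim_col sigma1 = 2"
  and dim_sigma3 [simp]: "dim_row sigma3 = 2" "dim_col sigma3 = 2"
  by (auto simp: sigma1_def sigma3_def)

lemma index_sigma1 [simp]:
    "sigma1 $$ (0, 0) = 0" "sigma1 $$ (0, 1) = 1" "sigma1 $$ (1, 0) = 1" "sigma1 $$ (1, 1) = 0"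
  and index_sigma3 [simp]:
    "sigma3 $$ (0, 0) = 1" "sigma3 $$ (0, 1) = 0" "sigma3 $$ (1, 0) = 0" "sigma3 $$ (1, 1) = -1"
  by (auto simp: sigma1_def sigma3_def)

lemma rotY_carrier [simp]: "rotY t \<in> carrier_mat 2 2"
  and dim_rotY [simp]: "dim_row (rotY t) = 2" "dim_col (rotY t) = 2"
  by (auto simp: rotY_def sigma2_def)

lemma index_rotY [simp]:
  "rotY t $$ (0, 0) = cos t" "rotY t $$ (0, 1) = - sin t"
  "rotY t $$ (1, 0) = sin t" "rotY t $$ (1, 1) = cos t"
proof -
  have "\<i> * x * \<i> = - x" for x :: complex by (simp add: complex_eq_iff)
  then show "rotY t $$ (0, 0) = cos t" "rotY t $$ (0, 1) = - sin t"
    "rotY t $$ (1, 0) = sin t" "rotY t $$ (1, 1) = cos t"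
    by (auto simp: rotY_def sigma2_def)
qed

lemmas index_sigma1_sigma3_rotY_Suc [simp] =
  index_sigma1[unfolded One_nat_def] index_sigma3[unfolded One_nat_def] index_rotY[unfolded One_nat_def]

lemma unitary_rotY: "adj (rotY t) * rotY t = 1\<^sub>m 2"
proof -
  have "complex_of_real (cos t) * cos t + complex_of_real (sin t) * sin t = 1"
    by (simp add: complex_eq_iff flip: power2_eq_square)
  then show ?thesis
    by (intro eq_mat_2I) (auto simp: mult_mat_2 algebra_simps)
qed

lemma unitary_bit_op_rotY: "m < n \<Longrightarrow> adj (bit_op n m (rotY t)) * bit_op n m (rotY t) = 1\<^sub>m (2 ^ n)"
  by (simp add: adj_bit_op bit_op_mult_bit_op unitary_rotY bit_op_one)

lemma rotY_conj_sigma3: "adj (rotY t) * sigma3 * rotY t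
   = complex_of_real (cos (2 * t)) \<cdot>\<^sub>m sigma3 + complex_of_real (- sin (2 * t)) \<cdot>\<^sub>m sigma1"
  unfolding cos_double sin_double
  by (intro eq_mat_2I) (simp_all add: mult_mat_2 complex_eq_iff power2_eq_square algebra_simps)

lemma rotY_conj_sigma1: "adj (rotY t) * sigma1 * rotY t
   = complex_of_real (cos (2 * t)) \<cdot>\<^sub>m sigma1 + complex_of_real (sin (2 * t)) \<cdot>\<^sub>m sigma3"
  unfolding cos_double sin_double
  by (intro eq_mat_2I) (simp_all add: mult_mat_2 complex_eq_iff power2_eq_square algebra_simps)

section \<open>Expectation values in the Heisenberg picture\<close>

definition expval :: "complex mat \<Rightarrow> complex mat \<Rightarrow> complex mat \<Rightarrow> real" where
  "expval \<rho> P S = Re (mtrace (P * S * \<rho> * adj S))"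

lemma expval_mult:
  assumes P: "P \<in> carrier_mat N N" and G: "G \<in> carrier_mat N N"
    and S: "S \<in> carrier_mat N N" and \<rho>: "\<rho> \<in> carrier_mat N N"
  shows "expval \<rho> P (G * S) = expval \<rho> (adj G * P * G) S"
proof -
  define X where "X = P * G * (S * \<rho> * adj S)"
  have X: "X \<in> carrier_mat N N" unfolding X_def using P G S \<rho> by simp
  have "P * (G * S) * \<rho> * adj (G * S) = X * adj G"
    unfolding X_def adj_mult[OF G S] using P G S \<rho> by (simp add: assoc_mult_mat[of _ N N _ N _ N])
  then have "mtrace (P * (G * S) * \<rho> * adj (G * S)) = mtrace (adj G * X)"
    using mtrace_mult_commute[OF X adj_carrier_square[OF G]] by simp
  also have "adj G * X = adj G * P * G * S * \<rho> * adj S"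
    unfolding X_def using P G S \<rho> by (simp add: assoc_mult_mat[of _ N N _ N _ N])
  finally show ?thesis by (simp add: expval_def)
qed

lemma expval_commuting_unitary:
  assumes P: "P \<in> carrier_mat N N" and G: "G \<in> carrier_mat N N"
    and S: "S \<in> carrier_mat N N" and \<rho>: "\<rho> \<in> carrier_mat N N"
    and unitary: "adj G * G = 1\<^sub>m N" and commute: "G * P = P * G"
  shows "expval \<rho> P (G * S) = expval \<rho> P S"
proof -
  have "adj G * P * G = adj G * (G * P)"
    unfolding commute using P G by (simp add: assoc_mult_mat[of _ N N _ N _ N])
  also have "\<dots> = P"
    using P G unitary by (simp flip: assoc_mult_mat[of _ N N _ N _ N])
  finally show ?thesis using expval_mult[OF P G S \<rho>] by simp
qed

lemma expval_lincomb:
  assumes A: "A \<in> carrier_mat N N" and B: "B \<in> carrier_mat N N"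
    and S: "S \<in> carrier_mat N N" and \<rho>: "\<rho> \<in> carrier_mat N N"
  shows "expval \<rho> (complex_of_real a \<cdot>\<^sub>m A + complex_of_real b \<cdot>\<^sub>m B) S
    = a * expval \<rho> A S + b * expval \<rho> B S"
proof -
  define X where "X = S * \<rho> * adj S"
  have X: "X \<in> carrier_mat N N" unfolding X_def using S \<rho> by simp
  have assoc: "C * S * \<rho> * adj S = C * X" if "C \<in> carrier_mat N N" for C
    unfolding X_def using that S \<rho> by (simp add: assoc_mult_mat[of _ N N _ N _ N])
  have "(complex_of_real a \<cdot>\<^sub>m A + complex_of_real b \<cdot>\<^sub>m B) * X
      = complex_of_real a \<cdot>\<^sub>m (A * X) + complex_of_real b \<cdot>\<^sub>m (B * X)"
    using A B X by (simp add: add_mult_distrib_mat[of _ N N] mult_smult_assoc_mat[of _ N N])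
  then show ?thesis
    unfolding expval_def using A B X by (simp add: assoc mtrace_add[of _ N] mtrace_smult[of _ N])
qed

lemma expval_rotY:
  assumes m: "m < n" and S: "S \<in> carrier_mat (2 ^ n) (2 ^ n)" and \<rho>: "\<rho> \<in> carrier_mat (2 ^ n) (2 ^ n)"
  shows "expval \<rho> (bit_op n m sigma3) (bit_op n m (rotY t) * S)
      = cos (2 * t) * expval \<rho> (bit_op n m sigma3) S - sin (2 * t) * expval \<rho> (bit_op n m sigma1) S"
    and "expval \<rho> (bit_op n m sigma1) (bit_op n m (rotY t) * S)
      = cos (2 * t) * expval \<rho> (bit_op n m sigma1) S + sin (2 * t) * expval \<rho> (bit_op n m sigma3) S"
proof -
  have conj: "adj (bit_op n m (rotY t)) * bit_op n m P * bit_op n m (rotY t)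
      = bit_op n m (adj (rotY t) * P * rotY t)" if "P \<in> carrier_mat 2 2" for P
  proof -
    have "adj (rotY t) * P \<in> carrier_mat 2 2" using that by simp
    then show ?thesis using that m by (simp add: adj_bit_op bit_op_mult_bit_op)
  qed
  show "expval \<rho> (bit_op n m sigma3) (bit_op n m (rotY t) * S)
      = cos (2 * t) * expval \<rho> (bit_op n m sigma3) S - sin (2 * t) * expval \<rho> (bit_op n m sigma1) S"
    unfolding expval_mult[OF bit_op_carrier bit_op_carrier S \<rho>] conj[OF sigma3_carrier]
      rotY_conj_sigma3 bit_op_lincomb[OF sigma3_carrier sigma1_carrier]
      expval_lincomb[OF bit_op_carrier bit_op_carrier S \<rho>]
    by simp
  show "expval \<rho> (bit_op n m sigma1) (bit_op n m (rotY t) * S)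
      = cos (2 * t) * expval \<rho> (bit_op n m sigma1) S + sin (2 * t) * expval \<rho> (bit_op n m sigma3) S"
    unfolding expval_mult[OF bit_op_carrier bit_op_carrier S \<rho>] conj[OF sigma1_carrier]
      rotY_conj_sigma1 bit_op_lincomb[OF sigma1_carrier sigma3_carrier]
      expval_lincomb[OF bit_op_carrier bit_op_carrier S \<rho>]
    by simp
qed


section \<open>Averaging over a uniformly distributed angle\<close>

abbreviation angle_measure :: "real measure" where
  "angle_measure \<equiv> uniform_measure lborel {0 .. 2 * pi}"

lemma prob_space_angle_measure: "prob_space angle_measure"
  by (rule prob_space_uniform_measure) (auto simp: emeasure_lborel_Icc)

lemma integral_angle_measure:
  fixes f :: "real \<Rightarrow> real"
  assumes f: "f \<in> borel_measurable borel"
  shows "(\<integral>y. f y \<partial>angle_measure)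
    = (\<integral>y. indicator {0 .. 2 * pi} y *\<^sub>R f y \<partial>lborel) / (2 * pi)"
proof -
  have "indicator {0 .. 2 * pi} y / emeasure lborel {0 .. 2 * pi} = ennreal (indicator {0 .. 2 * pi} y / (2 * pi))"
    for y :: real
    by (auto simp: emeasure_lborel_Icc indicator_def divide_ennreal[symmetric] ennreal_1[symmetric]
        simp del: ennreal_1)
  then have density: "angle_measure = density lborel (\<lambda>y. ennreal (indicator {0 .. 2 * pi} y / (2 * pi)))"
    unfolding uniform_measure_def by simp
  have "(\<integral>y. f y \<partial>angle_measure)
      = (\<integral>y. (indicator {0 .. 2 * pi} y / (2 * pi)) *\<^sub>R f y \<partial>lborel)"
    unfolding density by (rule integral_density) (use f in \<open>auto simp: indicator_def\<close>)
  also have "\<dots> = (\<integral>y. indicator {0 .. 2 * pi} y *\<^sub>R f y / (2 * pi) \<partial>lborel)"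
    by simp
  finally show ?thesis by (simp add: integral_divide_zero)
qed

lemma integral_angle_measure_cos_sin:
  fixes k :: int
  assumes "k \<noteq> 0"
  shows "(\<integral>y. cos (k * y) \<partial>angle_measure) = 0"
    and "(\<integral>y. sin (k * y) \<partial>angle_measure) = 0"
proof -
  have period: "sin (k * (2 * pi)) = 0" "cos (k * (2 * pi)) = 1"
    using sin_npi_int[of "2 * k"] cos_npi_int[of "2 * k"] by (simp_all add: mult.commute mult.left_commute)
  have "(\<integral>y. indicator {0 .. 2 * pi} y *\<^sub>R cos (k * y) \<partial>lborel)
      = sin (k * (2 * pi)) / k - sin (k * (0::real)) / k"
    by (rule integral_FTC_atLeastAtMost) (use assms in \<open>auto intro!: derivative_eq_intros continuous_intros
        simp: has_real_derivative_iff_has_vector_derivative[symmetric]\<close>)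
  then show "(\<integral>y. cos (k * y) \<partial>angle_measure) = 0"
    using period by (simp add: integral_angle_measure)
  have "(\<integral>y. indicator {0 .. 2 * pi} y *\<^sub>R sin (k * y) \<partial>lborel)
      = - cos (k * (2 * pi)) / k - (- cos (k * (0::real)) / k)"
    by (rule integral_FTC_atLeastAtMost) (use assms in \<open>auto intro!: derivative_eq_intros continuous_intros
        simp: has_real_derivative_iff_has_vector_derivative[symmetric]\<close>)
  then show "(\<integral>y. sin (k * y) \<partial>angle_measure) = 0"
    using period by (simp add: integral_angle_measure)
qed

definition bounded_measurable :: "'a measure \<Rightarrow> ('a \<Rightarrow> real) \<Rightarrow> bool" where
  "bounded_measurable M f \<longleftrightarrow> f \<in> borel_measurable M \<and> (\<exists>B. \<forall>x. \<bar>f x\<bar> \<le> B)"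

lemma bounded_measurable_const: "bounded_measurable M (\<lambda>x. c)"
  by (auto simp: bounded_measurable_def)

lemma bounded_measurable_add:
  assumes "bounded_measurable M f" "bounded_measurable M g"
  shows "bounded_measurable M (\<lambda>x. f x + g x)"
proof -
  obtain B1 B2 where "\<forall>x. \<bar>f x\<bar> \<le> B1" "\<forall>x. \<bar>g x\<bar> \<le> B2"
    using assms by (auto simp: bounded_measurable_def)
  then have "\<forall>x. \<bar>f x + g x\<bar> \<le> B1 + B2" by (metis abs_triangle_ineq add_mono order_trans)
  then show ?thesis using assms by (auto simp: bounded_measurable_def)
qed

lemma bounded_measurable_mult:
  assumes "bounded_measurable M f" "bounded_measurable M g"
  shows "bounded_measurable M (\<lambda>x. f x * g x)"
proof -
  obtain B1 B2 where "\<forall>x. \<bar>f x\<bar> \<le> B1" "\<forall>x. \<bar>g x\<bar> \<le> B2"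
    using assms by (auto simp: bounded_measurable_def)
  then have "\<forall>x. \<bar>f x * g x\<bar> \<le> B1 * B2"
    by (auto simp: abs_mult intro!: mult_mono order_trans[OF abs_ge_zero])
  then show ?thesis using assms by (auto simp: bounded_measurable_def)
qed

lemma (in finite_measure) integrable_bounded_measurable:
  "bounded_measurable M f \<Longrightarrow> integrable M f"
  unfolding bounded_measurable_def by (elim conjE exE) (rule integrable_const_bound, auto)

lemma prob_space_PiM_angle: "prob_space (\<Pi>\<^sub>M i\<in>I. angle_measure)"
  by (rule prob_space_PiM) (simp add: prob_space_angle_measure)

lemma measurable_PiM_angle_component:
  assumes "j \<in> I" and "h \<in> borel_measurable borel"
  shows "(\<lambda>\<theta>. h (\<theta> j)) \<in> borel_measurable (\<Pi>\<^sub>M i\<in>I. angle_measure)"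
proof -
  have "h \<in> borel_measurable angle_measure"
    using assms(2) by (subst measurable_cong_sets[of _ lborel borel borel]) auto
  then show ?thesis by (rule measurable_compose[OF measurable_component_singleton[OF assms(1)]])
qed

lemma bounded_measurable_PiM_angle_component:
  assumes "j \<in> I" and "bounded_measurable borel h"
  shows "bounded_measurable (\<Pi>\<^sub>M i\<in>I. angle_measure) (\<lambda>\<theta>. h (\<theta> j))"
  using assms measurable_PiM_angle_component[OF assms(1)] by (auto simp: bounded_measurable_def)

lemma integral_mult_fresh_angle_eq_0:
  assumes I: "finite I" and j: "j \<in> I"
    and h: "bounded_measurable borel h" "(\<integral>y. h y \<partial>angle_measure) = 0"
    and C: "bounded_measurable (\<Pi>\<^sub>M i\<in>I. angle_measure) C"
    and fresh: "\<And>\<theta> y. C (\<theta>(j := y)) = C \<theta>"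
  shows "(\<integral>\<theta>. h (\<theta> j) * C \<theta> \<partial>\<Pi>\<^sub>M i\<in>I. angle_measure) = 0"
proof -
  interpret P: prob_space "\<Pi>\<^sub>M i\<in>I. angle_measure" by (rule prob_space_PiM_angle)
  interpret U: prob_space angle_measure by (rule prob_space_angle_measure)
  interpret product_sigma_finite "\<lambda>_. angle_measure" by unfold_locales
  define J where "J = I - {j}"
  have IJ: "I = insert j J" and jJ: "j \<notin> J" and J: "finite J" using j I by (auto simp: J_def)
  have "bounded_measurable (\<Pi>\<^sub>M i\<in>I. angle_measure) (\<lambda>\<theta>. h (\<theta> j) * C \<theta>)"
    by (rule bounded_measurable_mult[OF bounded_measurable_PiM_angle_component[OF j h(1)] C])
  then have "integrable (\<Pi>\<^sub>M i\<in>insert j J. angle_measure) (\<lambda>\<theta>. h (\<theta> j) * C \<theta>)"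
    using P.integrable_bounded_measurable IJ by simp
  then have "(\<integral>\<theta>. h (\<theta> j) * C \<theta> \<partial>\<Pi>\<^sub>M i\<in>insert j J. angle_measure)
     = (\<integral>\<theta>. (\<integral>y. h y * C \<theta> \<partial>angle_measure) \<partial>\<Pi>\<^sub>M i\<in>J. angle_measure)"
    by (simp add: product_integral_insert[OF J jJ] fresh)
  then show ?thesis using IJ h(2) by simp
qed

lemma rotated_square_eq:
  fixes t a b :: real
  shows "(cos t * a + sin t * b)\<^sup>2
    = (a\<^sup>2 + b\<^sup>2) / 2 + cos (2 * t) * ((a\<^sup>2 - b\<^sup>2) / 2) + sin (2 * t) * (a * b)"
  unfolding cos_double sin_double power2_sum power_mult_distrib cos_squared_eq
  by (simp add: field_simps)

lemma integral_rotated_square: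
  assumes I: "finite I" and j: "j \<in> I"
    and A: "bounded_measurable (\<Pi>\<^sub>M i\<in>I. angle_measure) A"
    and fresh_A: "\<And>\<theta> y. A (\<theta>(j := y)) = A \<theta>"
    and B: "bounded_measurable (\<Pi>\<^sub>M i\<in>I. angle_measure) B"
    and fresh_B: "\<And>\<theta> y. B (\<theta>(j := y)) = B \<theta>"
  shows "(\<integral>\<theta>. (cos (2 * \<theta> j) * A \<theta> + sin (2 * \<theta> j) * B \<theta>)\<^sup>2 \<partial>\<Pi>\<^sub>M i\<in>I. angle_measure)
    = (\<integral>\<theta>. (A \<theta>)\<^sup>2 \<partial>\<Pi>\<^sub>M i\<in>I. angle_measure) / 2
      + (\<integral>\<theta>. (B \<theta>)\<^sup>2 \<partial>\<Pi>\<^sub>M i\<in>I. angle_measure) / 2"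
proof -
  let ?M = "\<Pi>\<^sub>M i\<in>I. angle_measure"
  interpret P: prob_space ?M by (rule prob_space_PiM_angle)
  define C where "C \<theta> = ((A \<theta>)\<^sup>2 - (B \<theta>)\<^sup>2) / 2" for \<theta>
  define D where "D \<theta> = A \<theta> * B \<theta>" for \<theta>
  have A2: "bounded_measurable ?M (\<lambda>\<theta>. (A \<theta>)\<^sup>2)"
    and B2: "bounded_measurable ?M (\<lambda>\<theta>. (B \<theta>)\<^sup>2)"
    using bounded_measurable_mult[OF A A] bounded_measurable_mult[OF B B] by (simp_all add: power2_eq_square)
  have C: "bounded_measurable ?M C" unfolding C_def diff_divide_distrib
    using bounded_measurable_add[OF bounded_measurable_mult[OF A2 bounded_measurable_const[of _ "1/2"]]
        bounded_measurable_mult[OF B2 bounded_measurable_const[of _ "-1/2"]]] by simp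
  have D: "bounded_measurable ?M D" unfolding D_def by (rule bounded_measurable_mult[OF A B])
  have cos4: "bounded_measurable borel (\<lambda>y. cos (4 * y))"
    and sin4: "bounded_measurable borel (\<lambda>y. sin (4 * y))"
    by (auto simp: bounded_measurable_def intro!: exI[of _ 1])
  have "(\<integral>\<theta>. cos (4 * \<theta> j) * C \<theta> \<partial>?M) = 0"
    using integral_angle_measure_cos_sin(1)[of 4]
    by (intro integral_mult_fresh_angle_eq_0[OF I j cos4 _ C]) (auto simp: C_def fresh_A fresh_B)
  moreover have "(\<integral>\<theta>. sin (4 * \<theta> j) * D \<theta> \<partial>?M) = 0"
    using integral_angle_measure_cos_sin(2)[of 4]
    by (intro integral_mult_fresh_angle_eq_0[OF I j sin4 _ D]) (auto simp: D_def fresh_A fresh_B)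
  moreover have "(cos (2 * \<theta> j) * A \<theta> + sin (2 * \<theta> j) * B \<theta>)\<^sup>2
      = (A \<theta>)\<^sup>2 / 2 + (B \<theta>)\<^sup>2 / 2 + cos (4 * \<theta> j) * C \<theta> + sin (4 * \<theta> j) * D \<theta>" for \<theta>
    using rotated_square_eq[of "2 * \<theta> j" "A \<theta>" "B \<theta>"] by (simp add: C_def D_def add_divide_distrib)
  ultimately show ?thesis
    using P.integrable_bounded_measurable[OF A2] P.integrable_bounded_measurable[OF B2]
      P.integrable_bounded_measurable[OF bounded_measurable_mult[OF
        bounded_measurable_PiM_angle_component[OF j cos4] C]]
      P.integrable_bounded_measurable[OF bounded_measurable_mult[OF
        bounded_measurable_PiM_angle_component[OF j sin4] D]]
    by simp
qed

definition bounded_measurable_mat :: "nat \<Rightarrow> 'a measure \<Rightarrow> ('a \<Rightarrow> complex mat) \<Rightarrow> bool" where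
  "bounded_measurable_mat N M F \<longleftrightarrow> (\<forall>x. F x \<in> carrier_mat N N) \<and>
     (\<forall>i<N. \<forall>j<N. (\<lambda>x. F x $$ (i, j)) \<in> borel_measurable M) \<and>
     (\<exists>B. \<forall>x i j. i < N \<longrightarrow> j < N \<longrightarrow> cmod (F x $$ (i, j)) \<le> B)"

lemma bounded_measurable_matD:
  assumes "bounded_measurable_mat N M F"
  obtains B where "\<And>x. F x \<in> carrier_mat N N"
    and "\<And>i j. i < N \<Longrightarrow> j < N \<Longrightarrow> (\<lambda>x. F x $$ (i, j)) \<in> borel_measurable M"
    and "\<And>x i j. i < N \<Longrightarrow> j < N \<Longrightarrow> cmod (F x $$ (i, j)) \<le> B"
  using assms unfolding bounded_measurable_mat_def by blast

lemma bounded_measurable_mat_const: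
  assumes A: "A \<in> carrier_mat N N"
  shows "bounded_measurable_mat N M (\<lambda>_. A)"
proof -
  have "cmod (A $$ (i, j)) \<le> (\<Sum>i'<N. \<Sum>j'<N. cmod (A $$ (i', j')))" if "i < N" "j < N" for i j
  proof -
    have "cmod (A $$ (i, j)) \<le> (\<Sum>j'<N. cmod (A $$ (i, j')))"
      by (rule member_le_sum) (use that in auto)
    also have "\<dots> \<le> (\<Sum>i'<N. \<Sum>j'<N. cmod (A $$ (i', j')))"
      by (rule member_le_sum[where f = "\<lambda>i'. \<Sum>j'<N. cmod (A $$ (i', j'))"])
        (use that in \<open>auto intro: sum_nonneg\<close>)
    finally show ?thesis .
  qed
  then show ?thesis unfolding bounded_measurable_mat_def
    using A by (intro conjI exI[of _ "\<Sum>i'<N. \<Sum>j'<N. cmod (A $$ (i', j'))"]) auto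
qed

lemma bounded_measurable_mat_mult:
  assumes "bounded_measurable_mat N M F" "bounded_measurable_mat N M G"
  shows "bounded_measurable_mat N M (\<lambda>x. F x * G x)"
proof -
  obtain B1 where F: "\<And>x. F x \<in> carrier_mat N N"
    and mF: "\<And>i j. i < N \<Longrightarrow> j < N \<Longrightarrow> (\<lambda>x. F x $$ (i, j)) \<in> borel_measurable M"
    and bF: "\<And>x i j. i < N \<Longrightarrow> j < N \<Longrightarrow> cmod (F x $$ (i, j)) \<le> B1"
    using assms(1) by (rule bounded_measurable_matD) blast
  obtain B2 where G: "\<And>x. G x \<in> carrier_mat N N"
    and mG: "\<And>i j. i < N \<Longrightarrow> j < N \<Longrightarrow> (\<lambda>x. G x $$ (i, j)) \<in> borel_measurable M"
    and bG: "\<And>x i j. i < N \<Longrightarrow> j < N \<Longrightarrow> cmod (G x $$ (i, j)) \<le> B2"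
    using assms(2) by (rule bounded_measurable_matD) blast
  have entry: "(F x * G x) $$ (i, j) = (\<Sum>k<N. F x $$ (i, k) * G x $$ (k, j))" if "i < N" "j < N" for x i j
    by (rule index_mult_mat_sum[OF F G that])
  have "(\<lambda>x. (F x * G x) $$ (i, j)) \<in> borel_measurable M" if "i < N" "j < N" for i j
    unfolding entry[OF that] using mF mG that by measurable
  moreover have "cmod ((F x * G x) $$ (i, j)) \<le> N * (B1 * B2)" if "i < N" "j < N" for x i j
  proof -
    have "cmod ((F x * G x) $$ (i, j)) \<le> (\<Sum>k<N. cmod (F x $$ (i, k)) * cmod (G x $$ (k, j)))"
      unfolding entry[OF that] norm_mult[symmetric] by (rule norm_sum)
    also have "\<dots> \<le> (\<Sum>k<N. B1 * B2)"
      by (rule sum_mono) (use bF bG that in \<open>auto intro!: mult_mono order_trans[OF norm_ge_zero]\<close>)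
    finally show ?thesis by simp
  qed
  ultimately show ?thesis unfolding bounded_measurable_mat_def
    using F G by (intro conjI exI[of _ "N * (B1 * B2)"]) auto
qed

lemma bounded_measurable_mat_adj:
  assumes "bounded_measurable_mat N M F"
  shows "bounded_measurable_mat N M (\<lambda>x. adj (F x))"
proof -
  obtain B where F: "\<And>x. F x \<in> carrier_mat N N"
    and mF: "\<And>i j. i < N \<Longrightarrow> j < N \<Longrightarrow> (\<lambda>x. F x $$ (i, j)) \<in> borel_measurable M"
    and bF: "\<And>x i j. i < N \<Longrightarrow> j < N \<Longrightarrow> cmod (F x $$ (i, j)) \<le> B"
    using assms by (rule bounded_measurable_matD) blast
  have entry: "adj (F x) $$ (i, j) = cnj (F x $$ (j, i))" if "i < N" "j < N" for x i j
    using F[of x] that by auto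
  show ?thesis unfolding bounded_measurable_mat_def entry
    using F bF mF by (auto simp: entry borel_measurable_complex_iff intro!: exI[of _ B])
qed

lemma bounded_measurable_Re_mtrace:
  assumes "bounded_measurable_mat N M F"
  shows "bounded_measurable M (\<lambda>x. Re (mtrace (F x)))"
proof -
  obtain B where F: "\<And>x. F x \<in> carrier_mat N N"
    and mF: "\<And>i j. i < N \<Longrightarrow> j < N \<Longrightarrow> (\<lambda>x. F x $$ (i, j)) \<in> borel_measurable M"
    and bF: "\<And>x i j. i < N \<Longrightarrow> j < N \<Longrightarrow> cmod (F x $$ (i, j)) \<le> B"
    using assms by (rule bounded_measurable_matD) blast
  have trace: "mtrace (F x) = (\<Sum>i<N. F x $$ (i, i))" for x
    using F[of x] by (simp add: mtrace_def)
  have "\<bar>Re (\<Sum>i<N. F x $$ (i, i))\<bar> \<le> N * B" for x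
  proof -
    have "\<bar>Re (\<Sum>i<N. F x $$ (i, i))\<bar> \<le> (\<Sum>i<N. cmod (F x $$ (i, i)))"
      using abs_Re_le_cmod norm_sum order_trans by blast
    also have "\<dots> \<le> (\<Sum>i<N. B)" by (rule sum_mono) (use bF in auto)
    finally show ?thesis by simp
  qed
  moreover have "(\<lambda>x. Re (\<Sum>i<N. F x $$ (i, i))) \<in> borel_measurable M"
    using mF by measurable
  ultimately show ?thesis unfolding bounded_measurable_def trace by (intro conjI exI[of _ "N * B"]) auto
qed

lemma bounded_measurable_expval:
  assumes "bounded_measurable_mat N M F" "P \<in> carrier_mat N N" "\<rho> \<in> carrier_mat N N"
  shows "bounded_measurable M (\<lambda>x. expval \<rho> P (F x))"
  unfolding expval_def using assms
  by (intro bounded_measurable_Re_mtrace bounded_measurable_mat_mult bounded_measurable_mat_const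
      bounded_measurable_mat_adj)

lemma bounded_measurable_mat_bit_op_rotY:
  assumes "j \<in> I"
  shows "bounded_measurable_mat (2 ^ n) (\<Pi>\<^sub>M i\<in>I. angle_measure) (\<lambda>\<theta>. bit_op n m (rotY (\<theta> j)))"
proof -
  have "(\<lambda>\<theta>. rotY (\<theta> j) $$ (a, b)) \<in> borel_measurable (\<Pi>\<^sub>M i\<in>I. angle_measure)"
    and "cmod (rotY t $$ (a, b)) \<le> 1" if "a < 2" "b < 2" for a b t
    using that measurable_PiM_angle_component[OF assms, of "\<lambda>y. complex_of_real (cos y)"]
      measurable_PiM_angle_component[OF assms, of "\<lambda>y. complex_of_real (sin y)"]
    by (auto simp: less_2_cases_iff)
  then show ?thesis unfolding bounded_measurable_mat_def
    by (auto simp: index_bit_op intro!: exI[of _ 1])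
qed

definition rotations :: "nat \<Rightarrow> (nat \<Rightarrow> real) \<Rightarrow> nat list \<Rightarrow> complex mat" where
  "rotations n \<theta> qs = foldr (\<lambda>q M. on_qubit n q (rotY (\<theta> (q - 1))) * M) qs (1\<^sub>m (2 ^ n))"

lemma rotations_Nil: "rotations n \<theta> [] = 1\<^sub>m (2 ^ n)"
  and rotations_Cons: "rotations n \<theta> (q # qs) = bit_op n (n - q) (rotY (\<theta> (q - 1))) * rotations n \<theta> qs"
  by (simp_all add: rotations_def on_qubit_eq_bit_op)

lemma rotations_carrier [simp]: "rotations n \<theta> qs \<in> carrier_mat (2 ^ n) (2 ^ n)"
  by (induction qs) (simp_all add: rotations_Nil rotations_Cons)

lemma unitary_rotations:
  "\<forall>q \<in> set qs. 1 \<le> q \<and> q \<le> n \<Longrightarrow> adj (rotations n \<theta> qs) * rotations n \<theta> qs = 1\<^sub>m (2 ^ n)"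
  by (induction qs) (auto simp: rotations_Nil rotations_Cons adj_one
      intro!: adj_mult_self_mult unitary_bit_op_rotY)

lemma rotations_commute_qubit1:
  "\<forall>q \<in> set qs. 2 \<le> q \<and> q \<le> n \<Longrightarrow>
    rotations n \<theta> qs * bit_op n (n - 1) P = bit_op n (n - 1) P * rotations n \<theta> qs"
  by (induction qs) (auto simp: rotations_Nil rotations_Cons
      intro!: mult_commute_mult[OF bit_op_carrier rotations_carrier bit_op_carrier] bit_op_commute)

lemma rotations_cong:
  "(\<And>q. q \<in> set qs \<Longrightarrow> \<theta> (q - 1) = \<theta>' (q - 1)) \<Longrightarrow> rotations n \<theta> qs = rotations n \<theta>' qs"
  by (induction qs) (simp_all add: rotations_Nil rotations_Cons)

lemma bounded_measurable_mat_rotations: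
  assumes "\<forall>q \<in> set qs. q - 1 \<in> I"
  shows "bounded_measurable_mat (2 ^ n) (\<Pi>\<^sub>M i\<in>I. angle_measure) (\<lambda>\<theta>. rotations n \<theta> qs)"
  using assms
  by (induction qs) (auto simp: rotations_Nil rotations_Cons
      intro: bounded_measurable_mat_const bounded_measurable_mat_mult bounded_measurable_mat_bit_op_rotY)

lemma V1_eq_rotations: "V1 n \<theta> = rotations n \<theta> [1..<n+1]"
  unfolding V1_def rotations_def ..

lemma SC_partial_0: "SC_partial n nc \<theta> 0 = rotations n \<theta> [1..<n+1]"
  by (simp add: Vl_def V1_eq_rotations)

lemma V1_eq:
  assumes "1 \<le> n"
  shows "V1 n \<theta> = bit_op n (n - 1) (rotY (\<theta> 0)) * rotations n \<theta> [2..<n+1]"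
proof -
  have "[1..<n+1] = 1 # [Suc 1..<n+1]" using assms by (intro upt_conv_Cons) simp
  then show ?thesis by (simp only: V1_eq_rotations rotations_Cons Suc_1) simp
qed

lemma Vl_carrier [simp]: "Vl n nc \<theta> l \<in> carrier_mat (2 ^ n) (2 ^ n)"
  by (simp add: Vl_def V1_eq_rotations on_qubit_eq_bit_op)

lemma CX_carrier [simp]: "CX n nc l \<in> carrier_mat (2 ^ n) (2 ^ n)"
  by (simp add: CX_def cnot_eq_perm_mat)

lemma SC_partial_carrier [simp]: "SC_partial n nc \<theta> k \<in> carrier_mat (2 ^ n) (2 ^ n)"
  by (induction k) simp_all

lemma SC_partial_step:
  "1 \<le> k \<Longrightarrow>
    SC_partial n nc \<theta> k = Vl n nc \<theta> (Suc k) * (CX n nc k * SC_partial n nc \<theta> (k - 1))"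
  by (cases k) (simp_all add: assoc_mult_mat[of _ "2 ^ n" "2 ^ n" _ "2 ^ n" _ "2 ^ n"])

lemma Vl_eq_bit_op: "1 \<le> k \<Longrightarrow> Vl n nc \<theta> (Suc k)
    = bit_op n (if k < n - nc then k else n - 1) (rotY (\<theta> (n + k - 1)))"
  by (simp add: Vl_def on_qubit_eq_bit_op)

lemma CX_eq_perm_mat:
  assumes "1 \<le> k" "k \<le> n - 1"
  shows "CX n nc k = perm_mat n (cnot_perm (k - 1) (if k < n - nc then k else n - 1))"
proof -
  have "n - (n + 1 - k) = k - 1" "k \<le> n - 1 - nc \<longleftrightarrow> k < n - nc" using assms by arith+
  moreover have "k \<le> n - 1 - nc \<Longrightarrow> n - (n - k) = k" by arith
  ultimately show ?thesis by (simp add: CX_def cnot_eq_perm_mat)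
qed

lemma SC_partial_cong:
  "(\<And>i. i < n + k \<Longrightarrow> \<theta> i = \<theta>' i) \<Longrightarrow> SC_partial n nc \<theta> k = SC_partial n nc \<theta>' k"
proof (induction k)
  case 0
  then show ?case unfolding SC_partial_0 by (intro rotations_cong) auto
qed (simp add: Vl_def)

lemma bounded_measurable_mat_SC_partial:
  assumes "k \<le> n - 1"
  shows "bounded_measurable_mat (2 ^ n) (param_measure n) (\<lambda>\<theta>. SC_partial n nc \<theta> k)"
  using assms
proof (induction k)
  case 0
  then show ?case unfolding SC_partial_0 param_measure_def
    by (intro bounded_measurable_mat_rotations) auto
next
  case (Suc k)
  have "Vl n nc \<theta> (k + 2) = bit_op n (n - (if k + 2 \<le> n - nc then n - (k + 1) else 1)) (rotY (\<theta> (n + k)))"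
    for \<theta> by (simp add: Vl_def on_qubit_eq_bit_op)
  moreover have "n + k \<in> {..<2 * n - 1}" using Suc.prems by auto
  ultimately have "bounded_measurable_mat (2 ^ n) (param_measure n) (\<lambda>\<theta>. Vl n nc \<theta> (k + 2))"
    unfolding param_measure_def by (simp add: bounded_measurable_mat_bit_op_rotY)
  then show ?case using Suc
    by (auto intro!: bounded_measurable_mat_mult bounded_measurable_mat_const[OF CX_carrier])
qed

section \<open>Tracking the Pauli expectations of qubit 1\<close>

locale sc_qnn =
  fixes n nc :: nat and \<rho> :: "complex mat"
  assumes two_le_n: "2 \<le> n" and nc_pos: "1 \<le> nc" and nc_less: "nc \<le> n - 1"
    and \<rho>_carrier: "\<rho> \<in> carrier_mat (2 ^ n) (2 ^ n)"
begin

abbreviation X1 :: "complex mat" where "X1 \<equiv> bit_op n (n - 1) sigma1"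
abbreviation Z1 :: "complex mat" where "Z1 \<equiv> bit_op n (n - 1) sigma3"

abbreviation bloch_xz_sq :: real where
  "bloch_xz_sq \<equiv> (Re (mtrace (X1 * \<rho>)))\<^sup>2 + (Re (mtrace (Z1 * \<rho>)))\<^sup>2"

abbreviation mean_sq :: "((nat \<Rightarrow> real) \<Rightarrow> real) \<Rightarrow> real" where
  "mean_sq f \<equiv> \<integral>\<theta>. (f \<theta>)\<^sup>2 \<partial>param_measure n"

definition x_exp :: "nat \<Rightarrow> (nat \<Rightarrow> real) \<Rightarrow> real" where
  "x_exp k \<theta> = expval \<rho> X1 (SC_partial n nc \<theta> k)"

definition z_exp :: "nat \<Rightarrow> (nat \<Rightarrow> real) \<Rightarrow> real" where
  "z_exp k \<theta> = expval \<rho> Z1 (SC_partial n nc \<theta> k)"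

definition z_exp_after_cnot :: "nat \<Rightarrow> (nat \<Rightarrow> real) \<Rightarrow> real" where
  "z_exp_after_cnot k \<theta> = expval \<rho> Z1 (CX n nc k * SC_partial n nc \<theta> (k - 1))"

lemma x_exp_0:
  "x_exp 0 \<theta> = cos (2 * \<theta> 0) * Re (mtrace (X1 * \<rho>)) + sin (2 * \<theta> 0) * Re (mtrace (Z1 * \<rho>))"
proof -
  define W where "W = rotations n \<theta> [2..<n+1]"
  have W: "W \<in> carrier_mat (2 ^ n) (2 ^ n)" unfolding W_def by simp
  have qs: "\<forall>q \<in> set [2..<n+1]. 2 \<le> q \<and> q \<le> n" "\<forall>q \<in> set [2..<n+1]. 1 \<le> q \<and> q \<le> n"
    by auto
  have W_invisible: "expval \<rho> (bit_op n (n - 1) P) W = Re (mtrace (bit_op n (n - 1) P * \<rho>))" for P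
  proof -
    have "expval \<rho> (bit_op n (n - 1) P) (W * 1\<^sub>m (2 ^ n)) = expval \<rho> (bit_op n (n - 1) P) (1\<^sub>m (2 ^ n))"
      unfolding W_def
      by (rule expval_commuting_unitary[OF bit_op_carrier rotations_carrier one_carrier_mat \<rho>_carrier
            unitary_rotations[OF qs(2)] rotations_commute_qubit1[OF qs(1)]])
    then show ?thesis using W \<rho>_carrier by (simp add: expval_def adj_one)
  qed
  have "SC_partial n nc \<theta> 0 = bit_op n (n - 1) (rotY (\<theta> 0)) * W"
    using two_le_n by (simp add: W_def Vl_def V1_eq)
  then have "x_exp 0 \<theta> = cos (2 * \<theta> 0) * expval \<rho> X1 W + sin (2 * \<theta> 0) * expval \<rho> Z1 W"
    unfolding x_exp_def using expval_rotY(2)[OF _ W \<rho>_carrier] two_le_n by simp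
  then show ?thesis by (simp only: W_invisible)
qed

lemma x_exp_step_off_qubit1:
  assumes "1 \<le> k" "k < n - nc"
  shows "x_exp k \<theta> = x_exp (k - 1) \<theta>"
proof -
  have k: "k < n" "k - 1 < n" "k \<noteq> n - 1" "k - 1 \<noteq> n - 1" "k - 1 \<noteq> k" using assms nc_pos by auto
  define C where "C = perm_mat n (cnot_perm (k - 1) k)"
  have "x_exp k \<theta> = expval \<rho> X1 (bit_op n k (rotY (\<theta> (n + k - 1))) * (C * SC_partial n nc \<theta> (k - 1)))"
    using assms by (simp add: x_exp_def C_def SC_partial_step Vl_eq_bit_op CX_eq_perm_mat)
  also have "\<dots> = expval \<rho> X1 (C * SC_partial n nc \<theta> (k - 1))"
    using k by (intro expval_commuting_unitary[OF bit_op_carrier bit_op_carrier _ \<rho>_carrier]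
        unitary_bit_op_rotY bit_op_commute) (auto simp: C_def)
  also have "\<dots> = x_exp (k - 1) \<theta>"
    unfolding x_exp_def C_def
    by (rule expval_commuting_unitary[OF bit_op_carrier perm_mat_carrier SC_partial_carrier \<rho>_carrier
          unitary_perm_mat[OF involution_cnot_perm] cnot_perm_commute_bit_op]) (use k in auto)
  finally show ?thesis .
qed

lemma x_exp_eq_x_exp_0: "k < n - nc \<Longrightarrow> x_exp k \<theta> = x_exp 0 \<theta>"
  by (induction k) (simp_all add: x_exp_step_off_qubit1)

lemma SC_partial_on_qubit1:
  assumes "n - nc \<le> k" "k \<le> n - 1"
  shows "SC_partial n nc \<theta> k
    = bit_op n (n - 1) (rotY (\<theta> (n + k - 1))) * (CX n nc k * SC_partial n nc \<theta> (k - 1))"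
  using assms two_le_n nc_less by (simp add: SC_partial_step Vl_eq_bit_op)

lemma x_exp_after_cnot_on_qubit1:
  assumes "n - nc \<le> k" "k \<le> n - 1"
  shows "expval \<rho> X1 (CX n nc k * SC_partial n nc \<theta> (k - 1)) = x_exp (k - 1) \<theta>"
proof -
  have k: "1 \<le> k" "k - 1 \<noteq> n - 1" using assms two_le_n nc_less by auto
  have CX: "CX n nc k = perm_mat n (cnot_perm (k - 1) (n - 1))"
    using assms k by (simp add: CX_eq_perm_mat)
  show ?thesis
    unfolding CX x_exp_def using k two_le_n
    by (intro expval_commuting_unitary[OF bit_op_carrier perm_mat_carrier SC_partial_carrier \<rho>_carrier]
        unitary_perm_mat involution_cnot_perm cnot_perm_commute_sigma1_target) auto
qed

lemma exp_step_on_qubit1: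
  assumes "n - nc \<le> k" "k \<le> n - 1"
  shows "x_exp k \<theta> = cos (2 * \<theta> (n + k - 1)) * x_exp (k - 1) \<theta>
      + sin (2 * \<theta> (n + k - 1)) * z_exp_after_cnot k \<theta>"
    and "z_exp k \<theta> = cos (2 * \<theta> (n + k - 1)) * z_exp_after_cnot k \<theta>
      + sin (2 * \<theta> (n + k - 1)) * - x_exp (k - 1) \<theta>"
  using x_exp_after_cnot_on_qubit1[OF assms] two_le_n \<rho>_carrier
  by (simp_all add: x_exp_def z_exp_def z_exp_after_cnot_def SC_partial_on_qubit1[OF assms] expval_rotY)

lemma bounded_measurable_x_exp: "k \<le> n - 1 \<Longrightarrow> bounded_measurable (param_measure n) (x_exp k)"
  and bounded_measurable_z_exp_after_cnot:
    "k \<le> n - 1 \<Longrightarrow> bounded_measurable (param_measure n) (z_exp_after_cnot k)"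
  unfolding x_exp_def[abs_def] z_exp_after_cnot_def[abs_def] using \<rho>_carrier
  by (auto intro!: bounded_measurable_expval bounded_measurable_mat_SC_partial bounded_measurable_mat_mult
      bounded_measurable_mat_const)

lemma x_exp_fresh: "n + k \<le> j \<Longrightarrow> x_exp k (\<theta>(j := y)) = x_exp k \<theta>"
  and z_exp_after_cnot_fresh:
    "n + (k - 1) \<le> j \<Longrightarrow> z_exp_after_cnot k (\<theta>(j := y)) = z_exp_after_cnot k \<theta>"
proof -
  have "SC_partial n nc (\<theta>(j := y)) l = SC_partial n nc \<theta> l" if "n + l \<le> j" for l
    using that by (intro SC_partial_cong) auto
  then show "n + k \<le> j \<Longrightarrow> x_exp k (\<theta>(j := y)) = x_exp k \<theta>"
    and "n + (k - 1) \<le> j \<Longrightarrow> z_exp_after_cnot k (\<theta>(j := y)) = z_exp_after_cnot k \<theta>"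
    by (simp_all add: x_exp_def z_exp_after_cnot_def)
qed

lemma integral_x_exp_0:
  "mean_sq (x_exp 0) = bloch_xz_sq / 2"
proof -
  interpret prob_space "param_measure n"
    unfolding param_measure_def by (rule prob_space_PiM_angle)
  have "0 \<in> {..<2 * n - 1}" using two_le_n by simp
  from integral_rotated_square[OF _ this bounded_measurable_const _ bounded_measurable_const]
  show ?thesis unfolding x_exp_0 param_measure_def[symmetric] by (simp add: prob_space)
qed

lemma integral_step_on_qubit1_ge:
  assumes "n - nc \<le> k" "k \<le> n - 1"
  shows "mean_sq (x_exp k) \<ge> mean_sq (x_exp (k - 1)) / 2"
    and "mean_sq (z_exp k) \<ge> mean_sq (x_exp (k - 1)) / 2"
proof -
  define j where "j = n + k - 1"
  have k: "1 \<le> k" "k - 1 \<le> n - 1" "n + (k - 1) \<le> j" "j \<in> {..<2 * n - 1}"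
    using assms two_le_n nc_less by (auto simp: j_def)
  have x: "bounded_measurable (param_measure n) (x_exp (k - 1))"
    and zc: "bounded_measurable (param_measure n) (z_exp_after_cnot k)"
    using k assms by (auto intro!: bounded_measurable_x_exp bounded_measurable_z_exp_after_cnot)
  have mx: "bounded_measurable (param_measure n) (\<lambda>\<theta>. - x_exp (k - 1) \<theta>)"
    using bounded_measurable_mult[OF bounded_measurable_const[of _ "-1"] x] by simp
  have "mean_sq (x_exp k) = mean_sq (x_exp (k - 1)) / 2 + mean_sq (z_exp_after_cnot k) / 2"
    unfolding exp_step_on_qubit1(1)[OF assms, folded j_def] param_measure_def
    using k x zc by (intro integral_rotated_square) (auto simp: param_measure_def x_exp_fresh z_exp_after_cnot_fresh)
  moreover have "mean_sq (z_exp k)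
      = mean_sq (z_exp_after_cnot k) / 2 + mean_sq (\<lambda>\<theta>. - x_exp (k - 1) \<theta>) / 2"
    unfolding exp_step_on_qubit1(2)[OF assms, folded j_def] param_measure_def
    using k mx zc by (intro integral_rotated_square) (auto simp: param_measure_def x_exp_fresh z_exp_after_cnot_fresh)
  moreover have "mean_sq (z_exp_after_cnot k) \<ge> 0" by simp
  ultimately show "mean_sq (x_exp k) \<ge> mean_sq (x_exp (k - 1)) / 2"
    and "mean_sq (z_exp k) \<ge> mean_sq (x_exp (k - 1)) / 2"
    by simp_all
qed

lemma integral_x_exp_ge:
  assumes "d \<le> nc - 1"
  shows "mean_sq (x_exp (n - nc - 1 + d)) \<ge> bloch_xz_sq / 2 ^ (d + 1)"
  using assms
proof (induction d)
  case 0
  have "x_exp (n - nc - 1) \<theta> = x_exp 0 \<theta>" for \<theta>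
    using nc_pos two_le_n nc_less by (intro x_exp_eq_x_exp_0) auto
  then show ?case by (simp add: integral_x_exp_0)
next
  case (Suc d)
  have k: "n - nc \<le> n - nc - 1 + Suc d" "n - nc - 1 + Suc d \<le> n - 1"
    "n - nc - 1 + Suc d - 1 = n - nc - 1 + d"
    using Suc.prems nc_pos nc_less by auto
  have "bloch_xz_sq / 2 ^ (Suc d + 1) = bloch_xz_sq / 2 ^ (d + 1) / 2" by simp
  also have "\<dots> \<le> mean_sq (x_exp (n - nc - 1 + d)) / 2"
    by (rule divide_right_mono) (use Suc in auto)
  also have "\<dots> \<le> mean_sq (x_exp (n - nc - 1 + Suc d))"
    using integral_step_on_qubit1_ge(1)[OF k(1,2)] unfolding k(3) .
  finally show ?case .
qed

lemma integral_z_exp_last_ge: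
  "mean_sq (z_exp (n - 1)) \<ge> bloch_xz_sq / 2 ^ (nc + 1)"
proof -
  have k: "n - nc \<le> n - 1" "n - 1 - 1 = n - nc - 1 + (nc - 1)" "nc - 1 + 1 = nc"
    using nc_pos nc_less two_le_n by auto
  have "bloch_xz_sq / 2 ^ (nc + 1) = bloch_xz_sq / 2 ^ (nc - 1 + 1) / 2" unfolding k(3) by simp
  also have "\<dots> \<le> mean_sq (x_exp (n - nc - 1 + (nc - 1))) / 2"
    by (rule divide_right_mono) (use integral_x_exp_ge[of "nc - 1"] in auto)
  also have "\<dots> \<le> mean_sq (z_exp (n - 1))"
    using integral_step_on_qubit1_ge(2)[OF k(1)] unfolding k(2) by simp
  finally show ?thesis .
qed

end

theorem lemma11:
  fixes n nc :: nat and \<rho> :: "complex mat"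
  assumes "n \<ge> 2" and "1 \<le> nc" and "nc \<le> n - 1"
    and "density_matrix n \<rho>"
  shows "(\<integral>\<theta>. (f_SC n nc \<rho> \<theta> - 1/2)\<^sup>2 \<partial>param_measure n)
         \<ge> ((Re (mtrace (on_qubit n 1 sigma1 * \<rho>)))\<^sup>2 + (Re (mtrace (on_qubit n 1 sigma3 * \<rho>)))\<^sup>2)
           / 2 ^ (3 + nc)"
proof -
  interpret sc_qnn n nc \<rho>
    using assms by unfold_locales (simp_all add: density_matrix_def)
  have "(f_SC n nc \<rho> \<theta> - 1/2)\<^sup>2 = (z_exp (n - 1) \<theta>)\<^sup>2 / 4" for \<theta>
    by (simp add: f_SC_def z_exp_def expval_def V_SC_def on_qubit_eq_bit_op power_divide)
  moreover have "(2::real) ^ (3 + nc) = 4 * 2 ^ (nc + 1)" by (simp add: power_add)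
  ultimately show ?thesis
    using integral_z_exp_last_ge by (simp add: on_qubit_eq_bit_op field_simps)
qed

end
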